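(* Fix a positive integer $n$ and let $PC_n$ be the set of unordered pairs $\{\alpha,\beta\}$ of compositions with $|\alpha|+|\beta|=n$. The relation $\{\alpha,\beta\}\le\{\gamma,\delta\}$ if and only if $L_\gamma L_\delta-L_\alpha L_\beta$ is $L$-positive (a nonnegative integer combination of fundamental quasi-symmetric functions) is a partial order on $PC_n$.
   Context: A composition of $n\ge0$ is a sequence of positive integers summing to $n$ (for $n=0$ this is the empty composition, for which $L$ is taken to be $1$). For a composition $\alpha=(\alpha_1,\dots,\alpha_k)$ of $n\ge1$, $D(\alpha)=\{\alpha_1,\dots,\alpha_1+\dots+\alpha_{k-1}\}$, $M_\alpha=\sum_{i_1<\dots<i_k}x_{i_1}^{\alpha_1}\cdots x_{i_k}^{\alpha_k}$, and $L_\alpha=\sum_{|\beta|=n,D(\beta)\subseteq D(\alpha)}M_\beta$. *)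

theory Defs
  imports Main "HOL-Library.Multiset"
begin

(* Formal power series in the variables x_0, x_1, ... with integer coefficients,
   represented by their coefficient function on exponent vectors (monomials)
   e :: nat => nat. *)
type_synonym fps_int = "(nat \<Rightarrow> nat) \<Rightarrow> int"

definition is_monomial :: "(nat \<Rightarrow> nat) \<Rightarrow> bool" where
  "is_monomial e \<longleftrightarrow> finite {i. e i \<noteq> 0}"

definition fmul :: "fps_int \<Rightarrow> fps_int \<Rightarrow> fps_int" where
  "fmul f g = (\<lambda>e. if is_monomial e then
      (\<Sum>(a,b)\<in>{(a,b). \<forall>i. a i + b i = e i}. f a * g b) else 0)"

definition is_comp :: "nat list \<Rightarrow> bool" where
  "is_comp \<alpha> \<longleftrightarrow> (\<forall>x\<in>set \<alpha>. 0 < x)"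

definition comps :: "nat \<Rightarrow> nat list set" where
  "comps n = {\<alpha>. is_comp \<alpha> \<and> sum_list \<alpha> = n}"

definition Dset :: "nat list \<Rightarrow> nat set" where
  "Dset \<alpha> = {sum_list (take i \<alpha>) | i. 1 \<le> i \<and> i < length \<alpha>}"

definition Mqs :: "nat list \<Rightarrow> fps_int" where
  "Mqs \<alpha> = (\<lambda>e. if is_monomial e \<and> map e (sorted_list_of_set {i. e i \<noteq> 0}) = \<alpha>
                 then 1 else 0)"

definition Lqs :: "nat list \<Rightarrow> fps_int" where
  "Lqs \<alpha> = (\<lambda>e. \<Sum>\<beta>\<in>{\<beta>\<in>comps (sum_list \<alpha>). Dset \<beta> \<subseteq> Dset \<alpha>}. Mqs \<beta> e)"

definition L_positive :: "fps_int \<Rightarrow> bool" where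
  "L_positive f \<longleftrightarrow> (\<exists>S c. finite S \<and> (\<forall>\<gamma>\<in>S. is_comp \<gamma>) \<and>
       f = (\<lambda>e. \<Sum>\<gamma>\<in>S. int (c \<gamma>) * Lqs \<gamma> e))"

definition PC :: "nat \<Rightarrow> nat list multiset set" where
  "PC n = {{#\<alpha>, \<beta>#} | \<alpha> \<beta>. is_comp \<alpha> \<and> is_comp \<beta> \<and> sum_list \<alpha> + sum_list \<beta> = n}"

(* {alpha,beta} <= {gamma,delta} iff L_gamma L_delta - L_alpha L_beta is L-positive
   (the product is commutative, so the choice of representatives is irrelevant) *)
definition pc_le :: "nat list multiset \<Rightarrow> nat list multiset \<Rightarrow> bool" where
  "pc_le P Q \<longleftrightarrow> (\<exists>\<alpha> \<beta> \<gamma> \<delta>. P = {#\<alpha>, \<beta>#} \<and> Q = {#\<gamma>, \<delta>#} \<and>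
      L_positive (\<lambda>e. fmul (Lqs \<gamma>) (Lqs \<delta>) e - fmul (Lqs \<alpha>) (Lqs \<beta>) e))"

definition pc_rel :: "nat \<Rightarrow> (nat list multiset \<times> nat list multiset) set" where
  "pc_rel n = {(P, Q). P \<in> PC n \<and> Q \<in> PC n \<and> pc_le P Q}"

end

theory Submission
  imports Defs
begin

text \<open>
  Reflexivity and transitivity are immediate, because the L-positive functions contain 0 and are
  closed under addition. Antisymmetry amounts to the fact that the product L_alpha L_beta
  determines the unordered pair {alpha, beta}.

  Coefficients of products are read off one variable at a time: the coefficient of x_0^s in
  L_alpha vanishes unless s is a partial sum of alpha, and otherwise the remaining variables see
  L of the composition that is left after that partial sum. Consequently, for n = |alpha| + |beta|
  the coefficient of x_0^t x_1^(n-t) in L_alpha L_beta counts the ways to write t as a partial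
  sum of alpha plus a partial sum of beta. Let alpha carry the smallest first part x. These counts
  determine x and whether beta also begins with x. Extracting the coefficients at x_0^x (and also
  at x_0^(2x) when both compositions begin with x) strips the part x off, and the claim follows
  by induction on n.
\<close>

section \<open>Partial sums of compositions\<close>

lemma is_comp_Nil [simp]: "is_comp []"
  by (simp add: is_comp_def)

lemma is_comp_Cons [simp]: "is_comp (x # xs) \<longleftrightarrow> 0 < x \<and> is_comp xs"
  by (auto simp: is_comp_def)

lemma is_comp_Nil_iff_sum_list_eq_0: "is_comp xs \<Longrightarrow> xs = [] \<longleftrightarrow> sum_list xs = 0"
  by (cases xs) auto

lemma length_le_sum_list: "is_comp xs \<Longrightarrow> length xs \<le> sum_list xs"
  by (induction xs) auto

lemma finite_comps: "finite (comps m)"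
proof (rule finite_subset)
  show "comps m \<subseteq> {xs. set xs \<subseteq> {0..m} \<and> length xs \<le> m}"
    by (auto simp: comps_def dest: length_le_sum_list member_le_sum_list)
  show "finite {xs. set xs \<subseteq> {0..m} \<and> length xs \<le> m}"
    by (rule finite_lists_length_le) auto
qed

definition partial_sums :: "nat list \<Rightarrow> nat set" where
  "partial_sums xs = (\<lambda>i. sum_list (take i xs)) ` {..length xs}"

lemma partial_sums_Nil [simp]: "partial_sums [] = {0}"
  by (simp add: partial_sums_def)

lemma partial_sums_Cons: "partial_sums (x # xs) = insert 0 ((+) x ` partial_sums xs)"
  by (simp add: partial_sums_def atMost_Suc_eq_insert_0 image_image)

lemma mem_partial_sums_Cons_iff:
  "s \<in> partial_sums (x # xs) \<longleftrightarrow> s = 0 \<or> (x \<le> s \<and> s - x \<in> partial_sums xs)"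
  by (auto simp: partial_sums_Cons image_iff) (metis add_diff_inverse_nat not_le)

lemma zero_in_partial_sums [simp]: "0 \<in> partial_sums xs"
  unfolding partial_sums_def by (rule image_eqI[of _ _ 0]) auto

lemma sum_list_in_partial_sums [simp]: "sum_list xs \<in> partial_sums xs"
  unfolding partial_sums_def by (rule image_eqI[of _ _ "length xs"]) auto

lemma hd_in_partial_sums [simp]: "x \<in> partial_sums (x # xs)"
  by (simp add: mem_partial_sums_Cons_iff)

lemma partial_sums_le_sum_list: "s \<in> partial_sums xs \<Longrightarrow> s \<le> sum_list xs"
  by (induction xs arbitrary: s) (auto simp: partial_sums_Cons)

lemma partial_sums_eq_Dset: "partial_sums xs = insert 0 (insert (sum_list xs) (Dset xs))"
proof -
  have "{..length xs} = insert 0 (insert (length xs) {i. 1 \<le> i \<and> i < length xs})"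
    by auto
  then show ?thesis
    by (simp add: partial_sums_def Dset_def image_Collect)
qed

lemma Dset_between:
  assumes "is_comp xs" "d \<in> Dset xs"
  shows "0 < d \<and> d < sum_list xs"
proof -
  obtain i where i: "1 \<le> i" "i < length xs" "d = sum_list (take i xs)"
    using assms(2) by (auto simp: Dset_def)
  have "is_comp (take i xs)" "is_comp (drop i xs)"
    using assms(1) by (auto simp: is_comp_def dest: in_set_takeD in_set_dropD)
  moreover have "take i xs \<noteq> []" "drop i xs \<noteq> []"
    using i by auto
  ultimately have "0 < sum_list (take i xs)" "0 < sum_list (drop i xs)"
    using is_comp_Nil_iff_sum_list_eq_0 by blast+
  moreover have "sum_list xs = sum_list (take i xs) + sum_list (drop i xs)"
    by (metis append_take_drop_id sum_list_append)
  ultimately show ?thesis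
    using i by auto
qed

lemma Dset_subset_iff_partial_sums_subset:
  assumes "is_comp xs" "is_comp ys" "sum_list xs = sum_list ys"
  shows "Dset xs \<subseteq> Dset ys \<longleftrightarrow> partial_sums xs \<subseteq> partial_sums ys"
  using assms Dset_between[OF assms(1)] by (fastforce simp: partial_sums_eq_Dset)

lemma hd_le_partial_sum: "s \<in> partial_sums xs \<Longrightarrow> 0 < s \<Longrightarrow> xs \<noteq> [] \<and> hd xs \<le> s"
  by (cases xs) (auto simp: mem_partial_sums_Cons_iff)

lemma partial_sums_inject:
  "is_comp xs \<Longrightarrow> is_comp ys \<Longrightarrow> partial_sums xs = partial_sums ys \<Longrightarrow> xs = ys"
proof (induction xs arbitrary: ys)
  case Nil
  show ?case
  proof (cases ys)
    case (Cons y ys')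
    then have "y \<in> partial_sums []"
      using Nil.prems(3) by simp
    then show ?thesis
      using Nil.prems(2) Cons by simp
  qed simp
next
  case (Cons x xs)
  have "0 < x"
    using Cons.prems(1) by simp
  show ?case
  proof (cases ys)
    case Nil
    then have "x \<in> partial_sums []"
      using Cons.prems(3) by (metis hd_in_partial_sums)
    then show ?thesis
      using \<open>0 < x\<close> by simp
  next
    case (Cons y ys')
    with Cons.prems have "0 < y" "x \<in> partial_sums (y # ys')" "y \<in> partial_sums (x # xs)"
      by (metis hd_in_partial_sums is_comp_Cons)+
    then have "x = y"
      using \<open>0 < x\<close> hd_le_partial_sum[of x "y # ys'"] hd_le_partial_sum[of y "x # xs"]
      by simp
    have "insert 0 ((+) x ` partial_sums xs) = insert 0 ((+) x ` partial_sums ys')"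
      using Cons.prems(3) Cons \<open>x = y\<close> by (simp add: partial_sums_Cons)
    then have "(+) x ` partial_sums xs = (+) x ` partial_sums ys'"
      using \<open>0 < x\<close> by (subst (asm) insert_ident) auto
    then have "partial_sums xs = partial_sums ys'"
      by (simp add: inj_image_eq_iff)
    then show ?thesis
      using Cons.IH Cons.prems Cons \<open>x = y\<close> by simp
  qed
qed

text \<open>When \<open>s\<close> is not a partial sum of \<open>xs\<close>, \<open>drop_sum s xs\<close> is junk.\<close>

fun drop_sum :: "nat \<Rightarrow> nat list \<Rightarrow> nat list" where
  "drop_sum 0 xs = xs"
| "drop_sum (Suc k) [] = []"
| "drop_sum (Suc k) (x # xs) = drop_sum (Suc k - x) xs"

lemma is_comp_drop_sum: "is_comp xs \<Longrightarrow> is_comp (drop_sum s xs)"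
  by (induction s xs rule: drop_sum.induct) auto

lemma sum_list_drop_sum:
  "s \<in> partial_sums xs \<Longrightarrow> sum_list (drop_sum s xs) = sum_list xs - s"
  by (induction s xs rule: drop_sum.induct) (auto simp: mem_partial_sums_Cons_iff)

lemma partial_sums_drop_sum:
  "s \<in> partial_sums xs \<Longrightarrow> partial_sums (drop_sum s xs) = {t. s + t \<in> partial_sums xs}"
  by (induction s xs rule: drop_sum.induct) (auto simp: mem_partial_sums_Cons_iff)

lemma drop_sum_Cons_add: "0 < x \<Longrightarrow> drop_sum (x + s) (x # xs) = drop_sum s xs"
  by (cases x) auto

lemma drop_sum_Cons_self: "0 < x \<Longrightarrow> drop_sum x (x # xs) = xs"
  using drop_sum_Cons_add[of x 0] by simp

section \<open>Monomials and the first variable\<close>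

definition cons_exp :: "nat \<Rightarrow> (nat \<Rightarrow> nat) \<Rightarrow> nat \<Rightarrow> nat" where
  "cons_exp x e = (\<lambda>i. case i of 0 \<Rightarrow> x | Suc j \<Rightarrow> e j)"

lemma cons_exp_0 [simp]: "cons_exp x e 0 = x"
  and cons_exp_Suc [simp]: "cons_exp x e (Suc j) = e j"
  by (simp_all add: cons_exp_def)

lemma cons_exp_eta: "cons_exp (e 0) (\<lambda>j. e (Suc j)) = e"
  by (rule ext) (simp add: cons_exp_def split: nat.split)

lemma cons_exp_eq_iff: "cons_exp x e = cons_exp y f \<longleftrightarrow> x = y \<and> e = f"
proof
  assume eq: "cons_exp x e = cons_exp y f"
  show "x = y \<and> e = f"
  proof
    show "x = y"
      using fun_cong[OF eq, of 0] by simp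
    show "e = f"
      using fun_cong[OF eq, of "Suc _"] by (intro ext) simp
  qed
qed simp

lemma support_cons_exp:
  "{i. cons_exp x e i \<noteq> 0} = (if x = 0 then {} else {0}) \<union> Suc ` {i. e i \<noteq> 0}"
proof (rule set_eqI)
  fix i
  show "i \<in> {i. cons_exp x e i \<noteq> 0} \<longleftrightarrow> i \<in> (if x = 0 then {} else {0}) \<union> Suc ` {i. e i \<noteq> 0}"
    by (cases i) auto
qed

lemma is_monomial_cons_exp [simp]: "is_monomial (cons_exp x e) \<longleftrightarrow> is_monomial e"
proof
  assume "is_monomial (cons_exp x e)"
  then have "finite (Suc -` {i. cons_exp x e i \<noteq> 0})"
    unfolding is_monomial_def by (rule finite_vimageI) simp
  then show "is_monomial e"
    by (simp add: is_monomial_def)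
next
  assume "is_monomial e"
  then show "is_monomial (cons_exp x e)"
    unfolding is_monomial_def support_cons_exp by simp
qed

lemma is_monomial_zero [simp]: "is_monomial (\<lambda>_. 0)"
  by (simp add: is_monomial_def)

definition comp_of_exp :: "(nat \<Rightarrow> nat) \<Rightarrow> nat list" where
  "comp_of_exp e = map e (sorted_list_of_set {i. e i \<noteq> 0})"

lemma is_comp_comp_of_exp: "is_monomial e \<Longrightarrow> is_comp (comp_of_exp e)"
  by (simp add: comp_of_exp_def is_comp_def is_monomial_def)

lemma comp_of_exp_zero [simp]: "comp_of_exp (\<lambda>_. 0) = []"
  by (simp add: comp_of_exp_def)

lemma sorted_list_of_set_Suc_image:
  "finite A \<Longrightarrow> sorted_list_of_set (Suc ` A) = map Suc (sorted_list_of_set A)"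
  by (subst sorted_list_of_set_unique[symmetric])
    (auto simp: sorted_wrt_map card_image distinct_card[symmetric] distinct_map)

lemma comp_of_exp_cons_exp:
  assumes "is_monomial e"
  shows "comp_of_exp (cons_exp x e) = (if x = 0 then comp_of_exp e else x # comp_of_exp e)"
proof -
  let ?Z = "{i. e i \<noteq> 0}"
  have fin: "finite ?Z"
    using assms by (simp add: is_monomial_def)
  have "sorted_list_of_set ((if x = 0 then {} else {0}) \<union> Suc ` ?Z)
      = (if x = 0 then [] else [0]) @ map Suc (sorted_list_of_set ?Z)"
    using fin by (simp add: insort_is_Cons sorted_list_of_set_Suc_image)
  then show ?thesis
    unfolding comp_of_exp_def support_cons_exp by (simp add: comp_def)
qed

lemma sum_list_comp_of_exp_cons_exp:
  "is_monomial e \<Longrightarrow> sum_list (comp_of_exp (cons_exp x e)) = x + sum_list (comp_of_exp e)"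
  by (simp add: comp_of_exp_cons_exp)

lemma partial_sums_comp_of_exp_cons_exp:
  "is_monomial e \<Longrightarrow>
    partial_sums (comp_of_exp (cons_exp x e)) = insert 0 ((+) x ` partial_sums (comp_of_exp e))"
  by (simp add: comp_of_exp_cons_exp partial_sums_Cons insert_absorb)

lemma Lqs_eq_indicator:
  assumes "is_comp \<alpha>"
  shows "Lqs \<alpha> e = (if is_monomial e \<and> sum_list (comp_of_exp e) = sum_list \<alpha>
      \<and> partial_sums (comp_of_exp e) \<subseteq> partial_sums \<alpha> then 1 else 0)"
proof -
  let ?B = "{\<beta> \<in> comps (sum_list \<alpha>). Dset \<beta> \<subseteq> Dset \<alpha>}"
  have "Lqs \<alpha> e = (\<Sum>\<beta>\<in>?B. if \<beta> = comp_of_exp e then (if is_monomial e then 1 else 0) else 0)"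
    unfolding Lqs_def Mqs_def comp_of_exp_def by (intro sum.cong) auto
  also have "\<dots> = (if comp_of_exp e \<in> ?B \<and> is_monomial e then 1 else 0)"
    by (simp add: sum.delta finite_comps)
  finally show ?thesis
    using assms is_comp_comp_of_exp
    by (auto simp: comps_def Dset_subset_iff_partial_sums_subset)
qed

lemma Lqs_nonneg: "0 \<le> Lqs \<alpha> e"
  by (simp add: Lqs_def Mqs_def sum_nonneg)

lemma Lqs_zero: "is_comp \<alpha> \<Longrightarrow> Lqs \<alpha> (\<lambda>_. 0) = (if \<alpha> = [] then 1 else 0)"
  by (simp add: Lqs_eq_indicator is_comp_Nil_iff_sum_list_eq_0)

lemma Lqs_cons_exp:
  assumes "is_comp \<alpha>"
  shows "Lqs \<alpha> (cons_exp x e) = (if x \<in> partial_sums \<alpha> then Lqs (drop_sum x \<alpha>) e else 0)"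
proof (cases "is_monomial e")
  case False
  then show ?thesis
    using assms by (simp add: Lqs_eq_indicator is_comp_drop_sum)
next
  case True
  define w where "w = comp_of_exp e"
  have L: "Lqs \<alpha> (cons_exp x e) = (if x + sum_list w = sum_list \<alpha>
      \<and> (+) x ` partial_sums w \<subseteq> partial_sums \<alpha> then 1 else 0)"
    using assms True
    by (simp add: Lqs_eq_indicator sum_list_comp_of_exp_cons_exp
        partial_sums_comp_of_exp_cons_exp w_def)
  show ?thesis
  proof (cases "x \<in> partial_sums \<alpha>")
    case x: True
    have "Lqs (drop_sum x \<alpha>) e = (if sum_list w = sum_list \<alpha> - x
        \<and> partial_sums w \<subseteq> {t. x + t \<in> partial_sums \<alpha>} then 1 else 0)"
      using assms True x
      by (simp add: Lqs_eq_indicator is_comp_drop_sum sum_list_drop_sum partial_sums_drop_sum w_def)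
    then show ?thesis
      using x partial_sums_le_sum_list[OF x] by (auto simp: L image_subset_iff)
  next
    case False
    then have "\<not> (+) x ` partial_sums w \<subseteq> partial_sums \<alpha>"
      by (metis add_0_right image_eqI subsetD zero_in_partial_sums)
    then show ?thesis
      using False by (simp add: L)
  qed
qed

section \<open>Coefficients of products of fundamental quasisymmetric functions\<close>

definition splittings :: "(nat \<Rightarrow> nat) \<Rightarrow> ((nat \<Rightarrow> nat) \<times> (nat \<Rightarrow> nat)) set" where
  "splittings e = {(a, b). \<forall>i. a i + b i = e i}"

lemma fmul_eq_sum_splittings:
  "fmul f g e = (if is_monomial e then \<Sum>(a, b)\<in>splittings e. f a * g b else 0)"
  by (simp add: fmul_def splittings_def)

lemma finite_splittings:
  assumes "is_monomial e"
  shows "finite (splittings e)"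
proof -
  let ?Z = "{i. e i \<noteq> 0}"
  let ?B = "{a. \<forall>i. (i \<in> ?Z \<longrightarrow> a i \<in> {..Max (e ` ?Z)}) \<and> (i \<notin> ?Z \<longrightarrow> a i = 0)}"
  have "finite ?Z"
    using assms by (simp add: is_monomial_def)
  then have "finite ?B"
    by (intro finite_set_of_finite_funs) auto
  have max: "e i \<le> Max (e ` ?Z)" if "i \<in> ?Z" for i
    using \<open>finite ?Z\<close> that by (intro Max_ge) auto
  have below: "a \<in> ?B" if "\<And>i. a i \<le> e i" for a
  proof (intro CollectI allI conjI impI)
    fix i
    show "i \<in> ?Z \<Longrightarrow> a i \<in> {..Max (e ` ?Z)}"
      using that[of i] max[of i] by simp
    show "i \<notin> ?Z \<Longrightarrow> a i = 0"
      using that[of i] by simp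
  qed
  have "(a, b) \<in> ?B \<times> ?B" if "(a, b) \<in> splittings e" for a b
  proof -
    have sum: "a i + b i = e i" for i
      using that by (simp add: splittings_def)
    have "a i \<le> e i" "b i \<le> e i" for i
      using sum[of i] by linarith+
    then show ?thesis
      using below by blast
  qed
  then have "splittings e \<subseteq> ?B \<times> ?B"
    by auto
  then show ?thesis
    using \<open>finite ?B\<close> by (meson finite_SigmaI finite_subset)
qed

lemma fmul_commute: "fmul f g = fmul g f"
proof (rule ext)
  fix e
  have "(\<Sum>(a, b)\<in>splittings e. f a * g b) = (\<Sum>(a, b)\<in>splittings e. g a * f b)"
    by (rule sum.reindex_bij_witness[of _ prod.swap prod.swap])
      (auto simp: splittings_def add.commute mult.commute)
  then show "fmul f g e = fmul g f e"
    by (simp add: fmul_eq_sum_splittings)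
qed

lemma fmul_zero: "fmul f g (\<lambda>_. 0) = f (\<lambda>_. 0) * g (\<lambda>_. 0)"
proof -
  have "splittings (\<lambda>_. 0) = {(\<lambda>_. 0, \<lambda>_. 0)}"
    by (auto simp: splittings_def fun_eq_iff)
  then show ?thesis
    by (simp add: fmul_eq_sum_splittings)
qed

lemma fmul_cons_exp:
  "fmul f g (cons_exp x e) =
    (\<Sum>s\<in>{0..x}. fmul (\<lambda>a. f (cons_exp s a)) (\<lambda>b. g (cons_exp (x - s) b)) e)"
proof (cases "is_monomial e")
  case False
  then show ?thesis
    by (simp add: fmul_eq_sum_splittings)
next
  case True
  define \<phi> where "\<phi> = (\<lambda>(s, a, b). (cons_exp s a, cons_exp (x - s) b))"
  have split_first: "splittings (cons_exp x e) = \<phi> ` (SIGMA s:{0..x}. splittings e)"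
  proof (rule set_eqI, rule iffI)
    fix p
    assume "p \<in> splittings (cons_exp x e)"
    then obtain a b where p: "p = (a, b)" "\<forall>i. a i + b i = cons_exp x e i"
      by (auto simp: splittings_def)
    have "a 0 + b 0 = x"
      using p(2) by (metis cons_exp_0)
    then have "a 0 \<le> x" "b 0 = x - a 0"
      by auto
    with p have "(a 0, (\<lambda>j. a (Suc j)), (\<lambda>j. b (Suc j))) \<in> (SIGMA s:{0..x}. splittings e)"
      by (simp add: splittings_def)
    moreover have "\<phi> (a 0, (\<lambda>j. a (Suc j)), (\<lambda>j. b (Suc j))) = p"
      using p \<open>b 0 = x - a 0\<close> cons_exp_eta[of a] cons_exp_eta[of b] by (simp add: \<phi>_def)
    ultimately show "p \<in> \<phi> ` (SIGMA s:{0..x}. splittings e)"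
      by (metis image_eqI)
  next
    fix p
    assume "p \<in> \<phi> ` (SIGMA s:{0..x}. splittings e)"
    then show "p \<in> splittings (cons_exp x e)"
      by (auto simp: \<phi>_def splittings_def cons_exp_def split: nat.splits)
  qed
  have "inj_on \<phi> (SIGMA s:{0..x}. splittings e)"
    by (auto simp: inj_on_def \<phi>_def cons_exp_eq_iff)
  then have "fmul f g (cons_exp x e)
      = (\<Sum>(s, a, b)\<in>(SIGMA s:{0..x}. splittings e). f (cons_exp s a) * g (cons_exp (x - s) b))"
    using True by (simp add: fmul_eq_sum_splittings split_first sum.reindex \<phi>_def case_prod_unfold)
  also have "\<dots> = (\<Sum>s\<in>{0..x}. \<Sum>(a, b)\<in>splittings e. f (cons_exp s a) * g (cons_exp (x - s) b))"
    by (rule sum.Sigma[symmetric]) (auto simp: finite_splittings[OF True])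
  finally show ?thesis
    using True by (simp add: fmul_eq_sum_splittings)
qed

lemma fmul_zero_left [simp]: "fmul (\<lambda>_. 0) g = (\<lambda>_. 0)"
  and fmul_zero_right [simp]: "fmul f (\<lambda>_. 0) = (\<lambda>_. 0)"
  by (simp_all add: fun_eq_iff fmul_eq_sum_splittings)

abbreviation Lprod :: "nat list \<Rightarrow> nat list \<Rightarrow> fps_int" where
  "Lprod \<alpha> \<beta> \<equiv> fmul (Lqs \<alpha>) (Lqs \<beta>)"

lemma Lprod_cong_mset: "{#\<alpha>, \<beta>#} = {#\<gamma>, \<delta>#} \<Longrightarrow> Lprod \<alpha> \<beta> = Lprod \<gamma> \<delta>"
  by (auto simp: add_eq_conv_diff fmul_commute)

lemma Lprod_cons_exp:
  assumes "is_comp \<alpha>" "is_comp \<beta>"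
  shows "Lprod \<alpha> \<beta> (cons_exp x e) = (\<Sum>s\<in>{0..x}.
    if s \<in> partial_sums \<alpha> \<and> x - s \<in> partial_sums \<beta>
    then Lprod (drop_sum s \<alpha>) (drop_sum (x - s) \<beta>) e else 0)"
proof -
  have "(\<lambda>a. Lqs \<gamma> (cons_exp s a)) = (if s \<in> partial_sums \<gamma> then Lqs (drop_sum s \<gamma>) else (\<lambda>_. 0))"
    if "is_comp \<gamma>" for \<gamma> s
    using that by (auto simp: Lqs_cons_exp)
  then show ?thesis
    using assms unfolding fmul_cons_exp by (intro sum.cong) auto
qed

lemma Lprod_zero:
  "is_comp \<alpha> \<Longrightarrow> is_comp \<beta> \<Longrightarrow> Lprod \<alpha> \<beta> (\<lambda>_. 0) = (if \<alpha> = [] \<and> \<beta> = [] then 1 else 0)"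
  by (simp add: fmul_zero Lqs_zero)

lemma Lprod_one_var:
  assumes "is_comp \<alpha>" "is_comp \<beta>"
  shows "Lprod \<alpha> \<beta> (cons_exp y (\<lambda>_. 0)) = (if y = sum_list \<alpha> + sum_list \<beta> then 1 else 0)"
proof -
  have "Lprod \<alpha> \<beta> (cons_exp y (\<lambda>_. 0))
      = (\<Sum>s\<in>{0..y}. if s = sum_list \<alpha> \<and> y = sum_list \<alpha> + sum_list \<beta> then 1 else 0)"
    unfolding Lprod_cons_exp[OF assms]
  proof (intro sum.cong refl)
    fix s
    assume "s \<in> {0..y}"
    then show "(if s \<in> partial_sums \<alpha> \<and> y - s \<in> partial_sums \<beta>
        then Lprod (drop_sum s \<alpha>) (drop_sum (y - s) \<beta>) (\<lambda>_. 0) else 0)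
      = (if s = sum_list \<alpha> \<and> y = sum_list \<alpha> + sum_list \<beta> then 1 else 0)"
      using assms partial_sums_le_sum_list[of s \<alpha>] partial_sums_le_sum_list[of "y - s" \<beta>]
      by (auto simp: Lprod_zero is_comp_drop_sum is_comp_Nil_iff_sum_list_eq_0 sum_list_drop_sum)
  qed
  also have "\<dots> = (if y = sum_list \<alpha> + sum_list \<beta> then 1 else 0)"
    by (simp add: sum.delta)
  finally show ?thesis .
qed

lemma sum_list_eq_if_Lprod_eq:
  assumes "is_comp \<alpha>" "is_comp \<beta>" "is_comp \<gamma>" "is_comp \<delta>" "Lprod \<alpha> \<beta> = Lprod \<gamma> \<delta>"
  shows "sum_list \<gamma> + sum_list \<delta> = sum_list \<alpha> + sum_list \<beta>"
  using Lprod_one_var[OF assms(1,2), of "sum_list \<alpha> + sum_list \<beta>"]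
    Lprod_one_var[OF assms(3,4), of "sum_list \<alpha> + sum_list \<beta>"] assms(5)
  by (auto split: if_splits)

definition sumset_count :: "nat list \<Rightarrow> nat list \<Rightarrow> nat \<Rightarrow> nat" where
  "sumset_count \<alpha> \<beta> t = card {s\<in>{0..t}. s \<in> partial_sums \<alpha> \<and> t - s \<in> partial_sums \<beta>}"

lemma Lprod_two_vars:
  assumes "is_comp \<alpha>" "is_comp \<beta>" "t \<le> sum_list \<alpha> + sum_list \<beta>"
  shows "Lprod \<alpha> \<beta> (cons_exp t (cons_exp (sum_list \<alpha> + sum_list \<beta> - t) (\<lambda>_. 0)))
    = int (sumset_count \<alpha> \<beta> t)"
proof -
  have "Lprod \<alpha> \<beta> (cons_exp t (cons_exp (sum_list \<alpha> + sum_list \<beta> - t) (\<lambda>_. 0)))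
      = (\<Sum>s\<in>{0..t}. if s \<in> partial_sums \<alpha> \<and> t - s \<in> partial_sums \<beta> then 1 else 0)"
    unfolding Lprod_cons_exp[OF assms(1,2)]
  proof (intro sum.cong refl)
    fix s
    assume "s \<in> {0..t}"
    then show "(if s \<in> partial_sums \<alpha> \<and> t - s \<in> partial_sums \<beta>
        then Lprod (drop_sum s \<alpha>) (drop_sum (t - s) \<beta>)
          (cons_exp (sum_list \<alpha> + sum_list \<beta> - t) (\<lambda>_. 0)) else 0)
      = (if s \<in> partial_sums \<alpha> \<and> t - s \<in> partial_sums \<beta> then 1 else 0)"
      using assms partial_sums_le_sum_list[of s \<alpha>] partial_sums_le_sum_list[of "t - s" \<beta>]
      by (auto simp: Lprod_one_var is_comp_drop_sum sum_list_drop_sum)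
  qed
  also have "\<dots> = int (sumset_count \<alpha> \<beta> t)"
    by (simp add: sumset_count_def sum.inter_filter[symmetric])
  finally show ?thesis .
qed

lemma sumset_count_eq_0: "sum_list \<alpha> + sum_list \<beta> < t \<Longrightarrow> sumset_count \<alpha> \<beta> t = 0"
  using partial_sums_le_sum_list[of _ \<alpha>] partial_sums_le_sum_list[of _ \<beta>]
  by (fastforce simp: sumset_count_def)

lemma sumset_count_eq_if_Lprod_eq:
  assumes "is_comp \<alpha>" "is_comp \<beta>" "is_comp \<gamma>" "is_comp \<delta>" "Lprod \<alpha> \<beta> = Lprod \<gamma> \<delta>"
  shows "sumset_count \<alpha> \<beta> = sumset_count \<gamma> \<delta>"
proof
  fix t
  have n: "sum_list \<gamma> + sum_list \<delta> = sum_list \<alpha> + sum_list \<beta>"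
    using sum_list_eq_if_Lprod_eq[OF assms] .
  show "sumset_count \<alpha> \<beta> t = sumset_count \<gamma> \<delta> t"
  proof (cases "t \<le> sum_list \<alpha> + sum_list \<beta>")
    case True
    then show ?thesis
      using Lprod_two_vars[OF assms(1,2) True] Lprod_two_vars[of \<gamma> \<delta> t] assms n by simp
  next
    case False
    then show ?thesis
      using n by (simp add: sumset_count_eq_0)
  qed
qed

lemma sumset_count_0: "sumset_count \<alpha> \<beta> 0 = 1"
proof -
  have "{s\<in>{0..0::nat}. s \<in> partial_sums \<alpha> \<and> 0 - s \<in> partial_sums \<beta>} = {0}"
    by auto
  then show ?thesis
    by (simp add: sumset_count_def)
qed

lemma sumset_count_commute: "sumset_count \<alpha> \<beta> t = sumset_count \<beta> \<alpha> t"
  unfolding sumset_count_def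
  by (rule bij_betw_same_card[of "\<lambda>s. t - s"], rule bij_betw_byWitness[of _ "\<lambda>s. t - s"]) auto

lemma sumset_count_Cons:
  assumes "0 < x"
  shows "sumset_count (x # \<alpha>) \<beta> t
    = (if t \<in> partial_sums \<beta> then 1 else 0) + (if x \<le> t then sumset_count \<alpha> \<beta> (t - x) else 0)"
proof -
  let ?A = "{s\<in>{0..t}. s = 0 \<and> t \<in> partial_sums \<beta>}"
  let ?B = "{s\<in>{0..t}. x \<le> s \<and> s - x \<in> partial_sums \<alpha> \<and> t - s \<in> partial_sums \<beta>}"
  have "{s\<in>{0..t}. s \<in> partial_sums (x # \<alpha>) \<and> t - s \<in> partial_sums \<beta>} = ?A \<union> ?B"
    by (auto simp: mem_partial_sums_Cons_iff)
  moreover have "?A \<inter> ?B = {}"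
    using assms by auto
  moreover have "card ?A = (if t \<in> partial_sums \<beta> then 1 else 0)"
    by (simp add: Collect_conv_if)
  moreover have "card ?B = (if x \<le> t then sumset_count \<alpha> \<beta> (t - x) else 0)"
  proof (cases "x \<le> t")
    case True
    have "?B = (+) x ` {r\<in>{0..t - x}. r \<in> partial_sums \<alpha> \<and> t - x - r \<in> partial_sums \<beta>}"
    proof (intro equalityI subsetI)
      fix s
      assume "s \<in> ?B"
      then show "s \<in> (+) x ` {r\<in>{0..t - x}. r \<in> partial_sums \<alpha> \<and> t - x - r \<in> partial_sums \<beta>}"
        by (intro image_eqI[of _ _ "s - x"]) auto
    qed (use True in auto)
    then show ?thesis
      using True by (simp add: card_image sumset_count_def)
  qed auto
  ultimately show ?thesis
    unfolding sumset_count_def by (simp add: card_Un_disjoint)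
qed

lemma sumset_count_Cons_self:
  "0 < x \<Longrightarrow> sumset_count (x # \<alpha>) \<beta> x = (if x \<in> partial_sums \<beta> then 1 else 0) + 1"
  by (simp add: sumset_count_Cons sumset_count_0)

lemma sumset_count_Cons_below:
  assumes "0 < t" "t < x" "\<beta> = [] \<or> x \<le> hd \<beta>"
  shows "sumset_count (x # \<alpha>) \<beta> t = 0"
proof -
  have "t \<notin> partial_sums \<beta>"
    using hd_le_partial_sum[of t \<beta>] assms by auto
  then show ?thesis
    using assms by (simp add: sumset_count_Cons)
qed

lemma sum_upto_two_terms:
  assumes "0 < (x::nat)" "\<And>s. 0 < s \<Longrightarrow> s < x \<Longrightarrow> h s = 0"
  shows "(\<Sum>s\<in>{0..x}. h s) = h 0 + h x"
proof -
  have "(\<Sum>s\<in>{0..x}. h s) = (\<Sum>s\<in>{0, x}. h s)"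
    by (rule sum.mono_neutral_right) (use assms in auto)
  then show ?thesis
    using assms by simp
qed

lemma sum_upto_three_terms:
  assumes "0 < (x::nat)" "\<And>s. s < 2 * x \<Longrightarrow> s \<noteq> 0 \<Longrightarrow> s \<noteq> x \<Longrightarrow> h s = 0"
  shows "(\<Sum>s\<in>{0..2 * x}. h s) = h 0 + h x + h (2 * x)"
proof -
  have "(\<Sum>s\<in>{0..2 * x}. h s) = (\<Sum>s\<in>{0, x, 2 * x}. h s)"
    by (rule sum.mono_neutral_right) (use assms in auto)
  then show ?thesis
    using assms by (simp add: add.assoc)
qed

lemma Lprod_Cons_cons_exp:
  assumes "0 < x" "is_comp \<alpha>" "is_comp \<beta>"
  shows "Lprod (x # \<alpha>) \<beta> (cons_exp x e)
    = (if x \<in> partial_sums \<beta> then Lprod (x # \<alpha>) (drop_sum x \<beta>) e else 0) + Lprod \<alpha> \<beta> e"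
  using assms
  by (simp add: Lprod_cons_exp sum_upto_two_terms mem_partial_sums_Cons_iff drop_sum_Cons_self)

lemma Lprod_Cons_Cons_cons_exp_double:
  assumes "0 < x" "is_comp \<alpha>" "is_comp \<beta>"
  shows "Lprod (x # \<alpha>) (x # \<beta>) (cons_exp (2 * x) e)
    = (if x \<in> partial_sums \<beta> then Lprod (x # \<alpha>) (drop_sum x \<beta>) e else 0) + Lprod \<alpha> \<beta> e
      + (if x \<in> partial_sums \<alpha> then Lprod (drop_sum x \<alpha>) (x # \<beta>) e else 0)"
proof -
  have double: "x + x \<in> partial_sums (x # \<gamma>) \<longleftrightarrow> x \<in> partial_sums \<gamma>"
    "drop_sum (x + x) (x # \<gamma>) = drop_sum x \<gamma>" for \<gamma>
    using assms(1) drop_sum_Cons_add[OF assms(1)] by (simp_all add: mem_partial_sums_Cons_iff)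
  have "Lprod (x # \<alpha>) (x # \<beta>) (cons_exp (2 * x) e) = (\<Sum>s\<in>{0..2 * x}.
      if s \<in> partial_sums (x # \<alpha>) \<and> 2 * x - s \<in> partial_sums (x # \<beta>)
      then Lprod (drop_sum s (x # \<alpha>)) (drop_sum (2 * x - s) (x # \<beta>)) e else 0)"
    (is "_ = (\<Sum>s\<in>_. ?h s)")
    using assms by (simp add: Lprod_cons_exp)
  also have "\<dots> = ?h 0 + ?h x + ?h (2 * x)"
    by (rule sum_upto_three_terms[OF assms(1)]) (auto simp: mem_partial_sums_Cons_iff)
  also have "\<dots> = (if x \<in> partial_sums \<beta> then Lprod (x # \<alpha>) (drop_sum x \<beta>) e else 0)
      + Lprod \<alpha> \<beta> e + (if x \<in> partial_sums \<alpha> then Lprod (drop_sum x \<alpha>) (x # \<beta>) e else 0)"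
    using assms by (simp add: mult_2 double drop_sum_Cons_self)
  finally show ?thesis .
qed

text \<open>When both factors begin with \<open>x\<close>, the coefficients at x_0^x x_1^x e and at x_0^(2x) e
  contain the same correction terms, but the coefficient of \<open>L\<^sub>\<alpha> L\<^sub>\<beta>\<close> at \<open>e\<close> twice and once,
  respectively.\<close>

lemma Lprod_eq_diff_Cons_Cons:
  assumes "0 < x" "is_comp \<alpha>" "is_comp \<beta>"
  shows "Lprod \<alpha> \<beta> e = Lprod (x # \<alpha>) (x # \<beta>) (cons_exp x (cons_exp x e))
    - Lprod (x # \<alpha>) (x # \<beta>) (cons_exp (2 * x) e)"
proof -
  have "Lprod (x # \<alpha>) (x # \<beta>) (cons_exp x (cons_exp x e))
      = Lprod (x # \<alpha>) \<beta> (cons_exp x e) + Lprod (x # \<beta>) \<alpha> (cons_exp x e)"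
    using assms Lprod_Cons_cons_exp[of x \<alpha> "x # \<beta>"]
    by (simp add: drop_sum_Cons_self fmul_commute[of "Lqs \<alpha>"])
  moreover note Lprod_Cons_cons_exp[OF assms, of e] Lprod_Cons_cons_exp[OF assms(1,3,2), of e]
    Lprod_Cons_Cons_cons_exp_double[OF assms, of e]
  ultimately show ?thesis
    by (simp add: fmul_commute[of "Lqs \<beta>" "Lqs \<alpha>"] fmul_commute[of "Lqs (x # \<beta>)" "Lqs (drop_sum x \<alpha>)"])
qed

lemma Lprod_Cons_Cons_cancel:
  assumes "0 < x" "is_comp \<alpha>" "is_comp \<beta>" "is_comp \<gamma>" "is_comp \<delta>"
    and "Lprod (x # \<alpha>) (x # \<beta>) = Lprod (x # \<gamma>) (x # \<delta>)"
  shows "Lprod \<alpha> \<beta> = Lprod \<gamma> \<delta>"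
  using assms by (simp add: fun_eq_iff Lprod_eq_diff_Cons_Cons[of x \<alpha> \<beta>] Lprod_eq_diff_Cons_Cons[of x \<gamma> \<delta>])

lemma Lprod_Cons_cancel:
  assumes "0 < x" "is_comp \<alpha>" "is_comp \<beta>" "is_comp \<gamma>" "is_comp \<delta>"
    and "x \<notin> partial_sums \<beta>" "x \<notin> partial_sums \<delta>"
    and "Lprod (x # \<alpha>) \<beta> = Lprod (x # \<gamma>) \<delta>"
  shows "Lprod \<alpha> \<beta> = Lprod \<gamma> \<delta>"
proof
  fix e
  show "Lprod \<alpha> \<beta> e = Lprod \<gamma> \<delta> e"
    using assms Lprod_Cons_cons_exp[of x \<alpha> \<beta> e] Lprod_Cons_cons_exp[of x \<gamma> \<delta> e] by simp
qed

section \<open>The product determines the pair\<close>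

text \<open>Under the ordering hypotheses, \<open>x\<close> is the least \<open>t > 0\<close> with
  \<open>sumset_count (x # \<alpha>) \<beta> t \<noteq> 0\<close>.\<close>

lemma hd_eq_if_sumset_count_eq:
  assumes "0 < x" "0 < y" "\<beta> = [] \<or> x \<le> hd \<beta>" "\<delta> = [] \<or> y \<le> hd \<delta>"
    and "sumset_count (x # \<alpha>) \<beta> = sumset_count (y # \<gamma>) \<delta>"
  shows "x = y"
proof (rule ccontr)
  assume "x \<noteq> y"
  then consider "x < y" | "y < x"
    by linarith
  then show False
  proof cases
    case 1
    then have "sumset_count (y # \<gamma>) \<delta> x = 0"
      using assms(1-4) by (simp add: sumset_count_Cons_below)
    then show False
      using assms sumset_count_Cons_self[of x \<alpha> \<beta>] by simp
  next
    case 2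
    then have "sumset_count (x # \<alpha>) \<beta> y = 0"
      using assms(1-4) by (simp add: sumset_count_Cons_below)
    then show False
      using assms sumset_count_Cons_self[of y \<gamma> \<delta>] by simp
  qed
qed

lemma eq_if_sumset_count_Cons_swap:
  assumes "0 < x" "is_comp \<alpha>" "is_comp \<beta>"
    and "sumset_count (x # \<alpha>) \<beta> = sumset_count (x # \<beta>) \<alpha>"
  shows "\<alpha> = \<beta>"
proof (rule partial_sums_inject[OF assms(2,3)], rule set_eqI)
  fix t
  have "sumset_count (x # \<alpha>) \<beta> t = sumset_count (x # \<beta>) \<alpha> t"
    using assms(4) by simp
  then show "t \<in> partial_sums \<alpha> \<longleftrightarrow> t \<in> partial_sums \<beta>"
    using assms(1) by (auto simp: sumset_count_Cons sumset_count_commute[of \<beta> \<alpha>] split: if_splits)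
qed

lemma Cons_mset_eq_if_sumset_count_eq:
  assumes "0 < x" "is_comp \<alpha>" "is_comp \<beta>" "{#\<alpha>, \<beta>#} = {#\<gamma>, \<delta>#}"
    and "sumset_count (x # \<alpha>) \<beta> = sumset_count (x # \<gamma>) \<delta>"
  shows "{#x # \<alpha>, \<beta>#} = {#x # \<gamma>, \<delta>#}"
proof -
  consider "\<gamma> = \<alpha>" "\<delta> = \<beta>" | "\<gamma> = \<beta>" "\<delta> = \<alpha>"
    using assms(4) by (auto simp: add_eq_conv_diff)
  then show ?thesis
  proof cases
    case 2
    then have "\<alpha> = \<beta>"
      using eq_if_sumset_count_Cons_swap assms by simp
    then show ?thesis
      using 2 by simp
  qed simp
qed

lemma eq_Cons_if_mem_partial_sums:
  "x \<in> partial_sums \<beta> \<Longrightarrow> 0 < x \<Longrightarrow> \<beta> = [] \<or> x \<le> hd \<beta> \<Longrightarrow> \<beta> = x # tl \<beta>"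
  using hd_le_partial_sum[of x \<beta>] by (cases \<beta>) auto

lemma obtain_mset_pair_hd_le:
  fixes \<alpha> \<beta> :: "nat list"
  assumes "\<not> (\<alpha> = [] \<and> \<beta> = [])"
  obtains x \<alpha>' \<beta>' where "{#x # \<alpha>', \<beta>'#} = {#\<alpha>, \<beta>#}" "\<beta>' = [] \<or> x \<le> hd \<beta>'"
proof (cases "\<beta> = [] \<or> (\<alpha> \<noteq> [] \<and> hd \<alpha> \<le> hd \<beta>)")
  case True
  then show ?thesis
    using assms by (intro that[of "hd \<alpha>" "tl \<alpha>" \<beta>]) auto
next
  case False
  then show ?thesis
    by (intro that[of "hd \<beta>" "tl \<beta>" \<alpha>]) (auto simp: add_mset_commute)
qed

lemma mset_eq_if_Lprod_eq:
  assumes "is_comp \<alpha>" "is_comp \<beta>" "is_comp \<gamma>" "is_comp \<delta>" "Lprod \<alpha> \<beta> = Lprod \<gamma> \<delta>"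
  shows "{#\<alpha>, \<beta>#} = {#\<gamma>, \<delta>#}"
  using assms
proof (induction "sum_list \<alpha> + sum_list \<beta>" arbitrary: \<alpha> \<beta> \<gamma> \<delta> rule: less_induct)
  case less
  have size: "sum_list \<gamma> + sum_list \<delta> = sum_list \<alpha> + sum_list \<beta>"
    using sum_list_eq_if_Lprod_eq less.prems .
  show ?case
  proof (cases "\<alpha> = [] \<and> \<beta> = []")
    case True
    moreover have "\<gamma> = []" "\<delta> = []"
      using True size less.prems(3,4) by (simp_all add: is_comp_Nil_iff_sum_list_eq_0)
    ultimately show ?thesis
      by simp
  next
    case False
    have "\<not> (\<gamma> = [] \<and> \<delta> = [])"
    proof
      assume "\<gamma> = [] \<and> \<delta> = []"
      then have "sum_list \<alpha> = 0" "sum_list \<beta> = 0"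
        using size by simp_all
      then show False
        using False less.prems(1,2) is_comp_Nil_iff_sum_list_eq_0 by blast
    qed
    obtain x \<alpha>' \<beta>' where \<alpha>\<beta>: "{#x # \<alpha>', \<beta>'#} = {#\<alpha>, \<beta>#}" and hd\<beta>': "\<beta>' = [] \<or> x \<le> hd \<beta>'"
      using False by (rule obtain_mset_pair_hd_le)
    obtain y \<gamma>' \<delta>' where \<gamma>\<delta>: "{#y # \<gamma>', \<delta>'#} = {#\<gamma>, \<delta>#}" and hd\<delta>': "\<delta>' = [] \<or> y \<le> hd \<delta>'"
      using \<open>\<not> (\<gamma> = [] \<and> \<delta> = [])\<close> by (rule obtain_mset_pair_hd_le)
    have comps: "0 < x" "is_comp \<alpha>'" "is_comp \<beta>'" "0 < y" "is_comp \<gamma>'" "is_comp \<delta>'"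
      using \<alpha>\<beta> \<gamma>\<delta> less.prems by (auto simp: add_eq_conv_diff)
    have sum: "sum_list \<alpha> + sum_list \<beta> = x + sum_list \<alpha>' + sum_list \<beta>'"
      using \<alpha>\<beta> by (auto simp: add_eq_conv_diff)
    have eq: "Lprod (x # \<alpha>') \<beta>' = Lprod (y # \<gamma>') \<delta>'"
      using less.prems(5) Lprod_cong_mset[OF \<alpha>\<beta>] Lprod_cong_mset[OF \<gamma>\<delta>] by simp
    have counts: "sumset_count (x # \<alpha>') \<beta>' = sumset_count (y # \<gamma>') \<delta>'"
      using comps by (intro sumset_count_eq_if_Lprod_eq[OF _ _ _ _ eq]) auto
    have "x = y"
      using comps(1,4) hd\<beta>' hd\<delta>' counts by (rule hd_eq_if_sumset_count_eq)
    have tie: "x \<in> partial_sums \<beta>' \<longleftrightarrow> x \<in> partial_sums \<delta>'"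
      using fun_cong[OF counts, of x] \<open>x = y\<close> comps(1)
      by (simp add: sumset_count_Cons_self split: if_splits)
    have "{#x # \<alpha>', \<beta>'#} = {#x # \<gamma>', \<delta>'#}"
    proof (cases "x \<in> partial_sums \<beta>'")
      case True
      have "\<beta>' = x # tl \<beta>'"
        using True comps(1) hd\<beta>' by (rule eq_Cons_if_mem_partial_sums)
      then obtain \<beta>'' where \<beta>': "\<beta>' = x # \<beta>''"
        by blast
      have "\<delta>' = x # tl \<delta>'"
        using True tie comps(1) hd\<delta>' \<open>x = y\<close> eq_Cons_if_mem_partial_sums by simp
      then obtain \<delta>'' where \<delta>': "\<delta>' = x # \<delta>''"
        by blast
      have tails: "is_comp \<beta>''" "is_comp \<delta>''"
        using comps \<beta>' \<delta>' by simp_all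
      have shorter: "sum_list \<alpha>' + sum_list \<beta>'' < sum_list \<alpha> + sum_list \<beta>"
        using sum comps(1) \<beta>' by simp
      have "Lprod \<alpha>' \<beta>'' = Lprod \<gamma>' \<delta>''"
        by (rule Lprod_Cons_Cons_cancel[of x]) (use comps tails eq \<beta>' \<delta>' \<open>x = y\<close> in auto)
      then have "{#\<alpha>', \<beta>''#} = {#\<gamma>', \<delta>''#}"
        by (rule less.hyps[OF shorter comps(2) tails(1) comps(5) tails(2)])
      then show ?thesis
        using \<beta>' \<delta>' by (auto simp: add_eq_conv_diff)
    next
      case False
      have shorter: "sum_list \<alpha>' + sum_list \<beta>' < sum_list \<alpha> + sum_list \<beta>"
        using sum comps(1) by simp
      have "Lprod \<alpha>' \<beta>' = Lprod \<gamma>' \<delta>'"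
        by (rule Lprod_Cons_cancel[of x]) (use comps eq tie False \<open>x = y\<close> in auto)
      then have "{#\<alpha>', \<beta>'#} = {#\<gamma>', \<delta>'#}"
        by (rule less.hyps[OF shorter comps(2,3,5,6)])
      then show ?thesis
        using Cons_mset_eq_if_sumset_count_eq comps(1-3) counts \<open>x = y\<close> by simp
    qed
    then show ?thesis
      using \<alpha>\<beta> \<gamma>\<delta> \<open>x = y\<close> by simp
  qed
qed

section \<open>The order on pairs of compositions\<close>

lemma L_positive_nonneg: "L_positive f \<Longrightarrow> 0 \<le> f e"
  unfolding L_positive_def by (auto intro!: sum_nonneg simp: Lqs_nonneg)

lemma L_positive_zero: "L_positive (\<lambda>_. 0)"
  unfolding L_positive_def by (rule exI[of _ "{}"]) simp

lemma L_positive_add: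
  assumes "L_positive f" "L_positive g"
  shows "L_positive (\<lambda>e. f e + g e)"
proof -
  obtain S c where S: "finite S" "\<forall>\<gamma>\<in>S. is_comp \<gamma>" "f = (\<lambda>e. \<Sum>\<gamma>\<in>S. int (c \<gamma>) * Lqs \<gamma> e)"
    using assms(1) unfolding L_positive_def by blast
  obtain T d where T: "finite T" "\<forall>\<gamma>\<in>T. is_comp \<gamma>" "g = (\<lambda>e. \<Sum>\<gamma>\<in>T. int (d \<gamma>) * Lqs \<gamma> e)"
    using assms(2) unfolding L_positive_def by blast
  let ?c = "\<lambda>\<gamma>. (if \<gamma> \<in> S then c \<gamma> else 0) + (if \<gamma> \<in> T then d \<gamma> else 0)"
  have sum_eq: "f e + g e = (\<Sum>\<gamma>\<in>S \<union> T. int (?c \<gamma>) * Lqs \<gamma> e)" for e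
  proof -
    have "(\<Sum>\<gamma>\<in>S \<union> T. int (?c \<gamma>) * Lqs \<gamma> e)
        = (\<Sum>\<gamma>\<in>S \<union> T. if \<gamma> \<in> S then int (c \<gamma>) * Lqs \<gamma> e else 0)
          + (\<Sum>\<gamma>\<in>S \<union> T. if \<gamma> \<in> T then int (d \<gamma>) * Lqs \<gamma> e else 0)"
      unfolding sum.distrib[symmetric] by (intro sum.cong) (auto simp: distrib_right)
    also have "\<dots> = f e + g e"
      using S T by (simp add: sum.inter_restrict[symmetric] Int_absorb1)
    finally show ?thesis ..
  qed
  show ?thesis
    unfolding L_positive_def using S(1,2) T(1,2) sum_eq
    by (intro exI[of _ "S \<union> T"] exI[of _ ?c]) auto
qed

lemma pc_le_pair_iff:
  "pc_le {#\<alpha>, \<beta>#} {#\<gamma>, \<delta>#} \<longleftrightarrow> L_positive (\<lambda>e. Lprod \<gamma> \<delta> e - Lprod \<alpha> \<beta> e)"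
  unfolding pc_le_def by (metis Lprod_cong_mset)

lemma obtain_PC:
  assumes "P \<in> PC n"
  obtains \<alpha> \<beta> where "P = {#\<alpha>, \<beta>#}" "is_comp \<alpha>" "is_comp \<beta>"
  using assms by (auto simp: PC_def)

lemma pc_le_refl: "P \<in> PC n \<Longrightarrow> pc_le P P"
  by (elim obtain_PC) (simp add: pc_le_pair_iff L_positive_zero)

lemma pc_le_trans: "P \<in> PC n \<Longrightarrow> Q \<in> PC n \<Longrightarrow> R \<in> PC n \<Longrightarrow> pc_le P Q \<Longrightarrow> pc_le Q R \<Longrightarrow> pc_le P R"
  by (elim obtain_PC) (auto simp: pc_le_pair_iff dest: L_positive_add)

lemma pc_le_antisym:
  assumes "P \<in> PC n" "Q \<in> PC n" "pc_le P Q" "pc_le Q P"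
  shows "P = Q"
proof -
  obtain \<alpha> \<beta> \<gamma> \<delta> where P: "P = {#\<alpha>, \<beta>#}" "is_comp \<alpha>" "is_comp \<beta>"
    and Q: "Q = {#\<gamma>, \<delta>#}" "is_comp \<gamma>" "is_comp \<delta>"
    using assms(1,2) by (metis obtain_PC)
  have PQ: "L_positive (\<lambda>e. Lprod \<gamma> \<delta> e - Lprod \<alpha> \<beta> e)"
    and QP: "L_positive (\<lambda>e. Lprod \<alpha> \<beta> e - Lprod \<gamma> \<delta> e)"
    using assms(3,4) by (simp_all add: P(1) Q(1) pc_le_pair_iff)
  have "Lprod \<alpha> \<beta> = Lprod \<gamma> \<delta>"
  proof
    fix e
    show "Lprod \<alpha> \<beta> e = Lprod \<gamma> \<delta> e"
      using L_positive_nonneg[OF PQ, of e] L_positive_nonneg[OF QP, of e] by simp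
  qed
  then show ?thesis
    using mset_eq_if_Lprod_eq[OF P(2,3) Q(2,3)] P(1) Q(1) by simp
qed

theorem proposition5p4:
  fixes n :: nat
  assumes "0 < n"
  shows "partial_order_on (PC n) (pc_rel n)"
  unfolding partial_order_on_def preorder_on_def
proof (intro conjI)
  show "pc_rel n \<subseteq> PC n \<times> PC n"
    by (auto simp: pc_rel_def)
  show "refl_on (PC n) (pc_rel n)"
    by (simp add: refl_on_def pc_rel_def pc_le_refl)
  show "trans (pc_rel n)"
    unfolding trans_on_def pc_rel_def using pc_le_trans by blast
  show "antisym (pc_rel n)"
    unfolding antisym_on_def pc_rel_def using pc_le_antisym by blast
qed

end
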